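(* Let $p$ be an odd prime, $q=p^m$, $q=et+1$ with integers $e\geq 2,t\geq 1$, $R_{e,q}=\mathbb{F}_q[u]/\langle u^e-1\rangle$, and let $\varphi:R_{e,q}^n\to\mathbb{F}_q^{en}$ be the Gray map defined by a matrix $M\in GL_e(\mathbb{F}_q)$ with $MM^T=\gamma I_e$, $\gamma\in\mathbb{F}_q^*$ (see context). Let $\mathcal{C}$ be a linear code of length $n$ over $R_{e,q}$ with $|\mathcal{C}|=q^{ek}$ and Gray distance $d_G$. Then: (1) $\varphi(\mathcal{C})$ is an $[en,ek,d_H]$ linear code over $\mathbb{F}_q$ with $d_H=d_G$; (2) $\varphi(\mathcal{C}^\perp)=(\varphi(\mathcal{C}))^\perp$; (3) if $\mathcal{C}$ is (Euclidean) self-orthogonal then $\varphi(\mathcal{C})$ is a (Euclidean) self-orthogonal linear code of length $en$ over $\mathbb{F}_q$; (4) $\varphi(\mathcal{C})$ is self-dual if and only if $\mathcal{C}$ is self-dual.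
   Context: Write $u^e-1=\prod_{i=1}^e(u-\alpha_i)$ over $\mathbb{F}_q$, $G_i=u-\alpha_i$, $\widehat{G}_i=(u^e-1)/G_i$, $z_iG_i+h_i\widehat{G}_i=1$, $\mu_i=h_i\widehat{G}_i$; these are pairwise orthogonal idempotents summing to $1$, and each $r\in R_{e,q}$ is uniquely $r=\sum_{i=1}^e s_i\mu_i$, $s_i\in\mathbb{F}_q$. The Gray map is $\varphi(r_0,\dots,r_{n-1})=(\boldsymbol{r_0}M,\dots,\boldsymbol{r_{n-1}}M)$ where $\boldsymbol{r_j}=(s_{j,1},\dots,s_{j,e})$ for $r_j=\sum_i s_{j,i}\mu_i$. A linear code is an $R_{e,q}$-submodule of $R_{e,q}^n$; $\mathcal{C}^\perp$ is taken with respect to the Euclidean inner product $x\cdot y=\sum_i x_iy_i$. Gray weight $w_G(r)=w_H(\varphi(r))$, Gray distance $d_G(c,c')=w_G(c-c')$, and $d_G$ of a code is the minimum over distinct codewords. *)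

theory Defs
  imports "HOL-Computational_Algebra.Polynomial" "HOL-Library.Function_Algebras" "HOL-Library.Cardinality"
begin

(* The modulus u^e - 1 of R_{e,q} = F_q[u]/<u^e - 1>.  Elements of R_{e,q} are represented
   by their canonical representatives: polynomials r with r mod (u^e - 1) = r. *)
definition umod :: "nat \<Rightarrow> 'a::field poly" where
  "umod e = monom 1 e - 1"

definition in_R :: "nat \<Rightarrow> 'a::field poly \<Rightarrow> bool" where
  "in_R e r \<longleftrightarrow> r mod umod e = r"

definition Gi :: "(nat \<Rightarrow> 'a::field) \<Rightarrow> nat \<Rightarrow> 'a poly" where
  "Gi \<alpha> i = [:- \<alpha> i, 1:]"

definition Ghat :: "nat \<Rightarrow> (nat \<Rightarrow> 'a::field) \<Rightarrow> nat \<Rightarrow> 'a poly" where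
  "Ghat e \<alpha> i = umod e div Gi \<alpha> i"

definition hcoef :: "nat \<Rightarrow> (nat \<Rightarrow> 'a::field) \<Rightarrow> nat \<Rightarrow> 'a poly" where
  "hcoef e \<alpha> i = (SOME h. \<exists>z. z * Gi \<alpha> i + h * Ghat e \<alpha> i = 1)"

definition mu :: "nat \<Rightarrow> (nat \<Rightarrow> 'a::field) \<Rightarrow> nat \<Rightarrow> 'a poly" where
  "mu e \<alpha> i = (hcoef e \<alpha> i * Ghat e \<alpha> i) mod umod e"

(* the unique (s_1,...,s_e) with r = sum_i s_i mu_i (indices shifted to 0..e-1) *)
definition coords :: "nat \<Rightarrow> (nat \<Rightarrow> 'a::field) \<Rightarrow> 'a poly \<Rightarrow> 'a list" where
  "coords e \<alpha> r = (THE s. length s = e \<and>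
       r = (\<Sum>i<e. smult (s ! i) (mu e \<alpha> i)) mod umod e)"

(* Words of length N over F_q: functions nat => 'a vanishing from index N on *)
definition Fwords :: "nat \<Rightarrow> (nat \<Rightarrow> 'a::zero) set" where
  "Fwords N = {x. \<forall>i\<ge>N. x i = 0}"

definition Rwords :: "nat \<Rightarrow> nat \<Rightarrow> (nat \<Rightarrow> 'a::field poly) set" where
  "Rwords e n = {c. (\<forall>j. in_R e (c j)) \<and> (\<forall>j\<ge>n. c j = 0)}"

(* Gray map: (r_0,...,r_{n-1}) |-> (r_0 M, ..., r_{n-1} M); block j occupies the
   positions j*e, ..., j*e + e - 1; M is given by its entries M i l, i,l < e. *)
definition gray :: "nat \<Rightarrow> (nat \<Rightarrow> 'a::field) \<Rightarrow> (nat \<Rightarrow> nat \<Rightarrow> 'a) \<Rightarrow> nat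
                     \<Rightarrow> (nat \<Rightarrow> 'a poly) \<Rightarrow> (nat \<Rightarrow> 'a)" where
  "gray e \<alpha> M n c = (\<lambda>idx. if idx < e * n then
       (\<Sum>i<e. coords e \<alpha> (c (idx div e)) ! i * M i (idx mod e)) else 0)"

definition R_linear_code :: "nat \<Rightarrow> nat \<Rightarrow> (nat \<Rightarrow> 'a::field poly) set \<Rightarrow> bool" where
  "R_linear_code e n C \<longleftrightarrow> C \<subseteq> Rwords e n \<and> C \<noteq> {} \<and>
     (\<forall>c\<in>C. \<forall>d\<in>C. c + d \<in> C) \<and>
     (\<forall>r. in_R e r \<longrightarrow> (\<forall>c\<in>C. (\<lambda>j. (r * c j) mod umod e) \<in> C))"

definition R_dual :: "nat \<Rightarrow> nat \<Rightarrow> (nat \<Rightarrow> 'a::field poly) set \<Rightarrow> (nat \<Rightarrow> 'a poly) set" where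
  "R_dual e n C = {d \<in> Rwords e n. \<forall>c\<in>C. (\<Sum>j<n. c j * d j) mod umod e = 0}"

definition fscale :: "'a::field \<Rightarrow> (nat \<Rightarrow> 'a) \<Rightarrow> (nat \<Rightarrow> 'a)" where
  "fscale a x = (\<lambda>i. a * x i)"

definition F_linear_code :: "nat \<Rightarrow> (nat \<Rightarrow> 'a::field) set \<Rightarrow> bool" where
  "F_linear_code N D \<longleftrightarrow> D \<subseteq> Fwords N \<and> 0 \<in> D \<and>
     (\<forall>x\<in>D. \<forall>y\<in>D. x + y \<in> D) \<and> (\<forall>a. \<forall>x\<in>D. fscale a x \<in> D)"

definition F_dim :: "(nat \<Rightarrow> 'a::field) set \<Rightarrow> nat" where
  "F_dim D = vector_space.dim fscale D"

definition F_dual :: "nat \<Rightarrow> (nat \<Rightarrow> 'a::field) set \<Rightarrow> (nat \<Rightarrow> 'a) set" where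
  "F_dual N D = {y \<in> Fwords N. \<forall>x\<in>D. (\<Sum>i<N. x i * y i) = 0}"

definition hamming_weight :: "nat \<Rightarrow> (nat \<Rightarrow> 'a::zero) \<Rightarrow> nat" where
  "hamming_weight N x = card {i. i < N \<and> x i \<noteq> 0}"

definition min_dist :: "nat \<Rightarrow> (nat \<Rightarrow> 'a::ab_group_add) set \<Rightarrow> nat" where
  "min_dist N D = Min {hamming_weight N (x - y) | x y. x \<in> D \<and> y \<in> D \<and> x \<noteq> y}"

definition gray_weight :: "nat \<Rightarrow> (nat \<Rightarrow> 'a::field) \<Rightarrow> (nat \<Rightarrow> nat \<Rightarrow> 'a) \<Rightarrow> nat
                     \<Rightarrow> (nat \<Rightarrow> 'a poly) \<Rightarrow> nat" where
  "gray_weight e \<alpha> M n c = hamming_weight (e * n) (gray e \<alpha> M n c)"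

definition gray_dist :: "nat \<Rightarrow> (nat \<Rightarrow> 'a::field) \<Rightarrow> (nat \<Rightarrow> nat \<Rightarrow> 'a) \<Rightarrow> nat
                     \<Rightarrow> (nat \<Rightarrow> 'a poly) set \<Rightarrow> nat" where
  "gray_dist e \<alpha> M n C = Min {gray_weight e \<alpha> M n (c - c') | c c'. c \<in> C \<and> c' \<in> C \<and> c \<noteq> c'}"

end

theory Submission
  imports Defs "HOL-Library.FuncSet"
begin

text \<open>
  Because \<open>u\<^sup>e - 1\<close> splits into distinct linear factors \<open>u - \<alpha>\<^sub>i\<close>, evaluation at
  \<open>\<alpha>\<^sub>1, \<dots>, \<alpha>\<^sub>e\<close> identifies \<open>R\<^sub>e\<^sub>,\<^sub>q\<close> with \<open>F\<^sub>q\<^sup>e\<close> (Chinese remaindering), the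
  idempotent \<open>\<mu>\<^sub>i\<close> being the \<open>i\<close>-th unit vector. So the coordinates \<open>s\<^sub>i\<close> of \<open>r\<close> are
  simply \<open>r(\<alpha>\<^sub>i)\<close>, and the Gray map is the \<open>F\<^sub>q\<close>-linear bijection sending each
  \<open>r\<^sub>j\<close> to \<open>(r\<^sub>j(\<alpha>\<^sub>1), \<dots>, r\<^sub>j(\<alpha>\<^sub>e)) M\<close>. As \<open>M M\<^sup>T = \<gamma> I\<close>, it scales inner products:
  \<open>\<phi>(c) \<cdot> \<phi>(d) = \<gamma> \<Sum>\<^sub>i (c \<cdot> d)(\<alpha>\<^sub>i)\<close>. This gives \<open>\<phi>(\<C>\<^sup>\<bottom>) \<subseteq> \<phi>(\<C>)\<^sup>\<bottom>\<close>; conversely,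
  if \<open>\<phi>(d) \<perpendicular> \<phi>(\<C>)\<close> then testing against \<open>\<phi>(\<mu>\<^sub>i c)\<close>, which lies in \<open>\<phi>(\<C>)\<close> because
  \<open>\<C>\<close> is a submodule, isolates the single term \<open>(c \<cdot> d)(\<alpha>\<^sub>i) = 0\<close>, so \<open>c \<cdot> d = 0\<close> in
  \<open>R\<^sub>e\<^sub>,\<^sub>q\<close>. Dimension and distance are preserved since \<open>\<phi>\<close> is an additive bijection.
\<close>

lemma in_R_mod: "in_R e (x mod umod e)"
  unfolding in_R_def by simp

lemma in_R_0: "in_R e 0"
  unfolding in_R_def by simp

lemma in_R_add: "in_R e x \<Longrightarrow> in_R e y \<Longrightarrow> in_R e (x + y)"
  unfolding in_R_def by (simp add: poly_mod_add_left)

lemma in_R_diff: "in_R e x \<Longrightarrow> in_R e y \<Longrightarrow> in_R e (x - y)"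
  unfolding in_R_def by (simp add: poly_mod_diff_left)

lemma in_R_Rwords: "c \<in> Rwords e n \<Longrightarrow> in_R e (c j)"
  unfolding Rwords_def by auto

lemma Rwords_vanish: "c \<in> Rwords e n \<Longrightarrow> n \<le> j \<Longrightarrow> c j = 0"
  unfolding Rwords_def by auto

lemma Rwords_add: "c \<in> Rwords e n \<Longrightarrow> d \<in> Rwords e n \<Longrightarrow> c + d \<in> Rwords e n"
  unfolding Rwords_def by (auto intro: in_R_add)

lemma Rwords_diff: "c \<in> Rwords e n \<Longrightarrow> d \<in> Rwords e n \<Longrightarrow> c - d \<in> Rwords e n"
  unfolding Rwords_def by (auto intro: in_R_diff)

interpretation fscale: vector_space "fscale :: 'a::field \<Rightarrow> (nat \<Rightarrow> 'a) \<Rightarrow> nat \<Rightarrow> 'a"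
  by unfold_locales (auto simp: fscale_def fun_eq_iff algebra_simps)

lemma card_F_linear_code:
  fixes D :: "(nat \<Rightarrow> 'a::{finite,field}) set"
  assumes lin: "F_linear_code N D" and fin: "finite D"
  shows "card D = CARD('a) ^ F_dim D"
proof -
  have sub: "fscale.subspace D"
    using lin unfolding fscale.subspace_def F_linear_code_def by auto
  obtain B where B: "B \<subseteq> D" "fscale.independent B" "D \<subseteq> fscale.span B" "card B = fscale.dim D"
    by (rule fscale.basis_exists)
  have finB: "finite B"
    using B(1) fin by (rule finite_subset)
  define f where "f u = (\<Sum>v\<in>B. fscale (u v) v)" for u :: "(nat \<Rightarrow> 'a) \<Rightarrow> 'a"
  have range: "range f = D"
    using fscale.span_subspace[OF B(1,3) sub] fscale.span_finite[OF finB] unfolding f_def by simp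
  have image: "f ` (B \<rightarrow>\<^sub>E UNIV) = D"
  proof
    show "D \<subseteq> f ` (B \<rightarrow>\<^sub>E UNIV)"
    proof
      fix x assume "x \<in> D"
      then obtain u where "x = f u"
        using range by blast
      also have "\<dots> = f (restrict u B)"
        unfolding f_def by (intro sum.cong) auto
      finally show "x \<in> f ` (B \<rightarrow>\<^sub>E UNIV)"
        by simp
    qed
  qed (use range in blast)
  have "inj_on f (B \<rightarrow>\<^sub>E UNIV)"
  proof (rule inj_onI)
    fix u u' assume u: "u \<in> B \<rightarrow>\<^sub>E UNIV" and u': "u' \<in> B \<rightarrow>\<^sub>E UNIV" and "f u = f u'"
    then have "(\<Sum>v\<in>B. fscale (u v - u' v) v) = 0"
      unfolding f_def by (simp add: fscale.scale_left_diff_distrib sum_subtractf)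
    then have "\<forall>v\<in>B. u v - u' v = 0"
      using fscale.independentD[OF B(2) finB order_refl, of "\<lambda>v. u v - u' v"] by blast
    then show "u = u'"
      using u u' by (intro PiE_ext) auto
  qed
  then have "card D = card (B \<rightarrow>\<^sub>E (UNIV :: 'a set))"
    using image card_image by fastforce
  also have "\<dots> = CARD('a) ^ F_dim D"
    using finB B(4) by (simp add: card_PiE F_dim_def)
  finally show ?thesis .
qed

lemma F_dim_eq_of_card:
  fixes D :: "(nat \<Rightarrow> 'a::{finite,field}) set"
  assumes "F_linear_code N D" and "card D = CARD('a) ^ k"
  shows "F_dim D = k"
proof -
  have "finite D"
    using assms(2) by (intro card_ge_0_finite) simp
  moreover have "1 < CARD('a)"
    using card_mono[of UNIV "{0, 1 :: 'a}"] by simp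
  ultimately show ?thesis
    using card_F_linear_code[OF assms(1)] assms(2) by (simp add: power_inject_exp)
qed

locale split_modulus =
  fixes e :: nat and \<alpha> :: "nat \<Rightarrow> 'a::field"
  assumes inj_on_roots: "inj_on \<alpha> {..<e}"
    and umod_split: "umod e = (\<Prod>i<e. [:- \<alpha> i, 1:])"
begin

lemma umod_nonzero: "umod e \<noteq> (0::'a poly)"
  using umod_split by (simp add: prod_zero_iff)

lemma degree_umod: "degree (umod e :: 'a poly) = e"
  unfolding umod_split by (subst degree_prod_eq_sum_degree) auto

lemma e_pos: "e > 0"
  using umod_nonzero by (cases e) (auto simp: umod_def)

lemma in_R_degree_less:
  assumes "in_R e (r :: 'a poly)"
  shows "degree r < e"
proof (cases "r = 0")
  case True
  then show ?thesis using e_pos by simp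
next
  case False
  then have "r mod umod e \<noteq> 0"
    using assms unfolding in_R_def by simp
  then have "degree (r mod umod e) < degree (umod e :: 'a poly)"
    by (rule degree_mod_less'[OF umod_nonzero])
  then show ?thesis using assms unfolding in_R_def by (simp add: degree_umod)
qed

lemma in_R_const: "in_R e [:a::'a:]"
  unfolding in_R_def using e_pos by (intro mod_poly_less) (simp add: degree_umod)

lemma poly_umod_root: "j < e \<Longrightarrow> poly (umod e) (\<alpha> j) = 0"
  unfolding umod_split poly_prod by (rule prod_zero) auto

lemma poly_mod_umod: "j < e \<Longrightarrow> poly (x mod umod e :: 'a poly) (\<alpha> j) = poly x (\<alpha> j)"
  by (metis add_0 div_mult_mod_eq mult_zero_right poly_add poly_mult poly_umod_root)

lemma in_R_eqI:
  assumes "in_R e (r :: 'a poly)" "in_R e r'" "\<And>j. j < e \<Longrightarrow> poly r (\<alpha> j) = poly r' (\<alpha> j)"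
  shows "r = r'"
proof -
  have "card (\<alpha> ` {..<e}) = e"
    using inj_on_roots by (simp add: card_image)
  then show ?thesis
    using assms in_R_degree_less by (intro poly_eqI_degree[of "\<alpha> ` {..<e}"]) auto
qed

lemma Ghat_eq_prod:
  assumes "i < e"
  shows "Ghat e \<alpha> i = (\<Prod>l\<in>{..<e}-{i}. [:- \<alpha> l, 1:])"
proof -
  have "umod e = Gi \<alpha> i * (\<Prod>l\<in>{..<e}-{i}. [:- \<alpha> l, 1:])"
    unfolding umod_split Gi_def using assms by (subst prod.remove[of _ i]) auto
  moreover have "Gi \<alpha> i \<noteq> 0"
    by (simp add: Gi_def)
  ultimately show ?thesis
    unfolding Ghat_def by simp
qed

lemma poly_Ghat_eq_0_iff:
  assumes "i < e" "j < e"
  shows "poly (Ghat e \<alpha> i) (\<alpha> j) = 0 \<longleftrightarrow> i \<noteq> j"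
proof -
  have "poly (Ghat e \<alpha> i) (\<alpha> j) = (\<Prod>l\<in>{..<e}-{i}. \<alpha> j - \<alpha> l)"
    using assms by (simp add: Ghat_eq_prod poly_prod)
  moreover have "\<alpha> j \<noteq> \<alpha> l" if "l \<in> {..<e}-{j}" for l
    using inj_on_roots assms that by (auto dest: inj_onD)
  ultimately show ?thesis
    using assms by (auto simp: prod_zero_iff)
qed

lemma hcoef_bezout:
  assumes "i < e"
  shows "\<exists>z. z * Gi \<alpha> i + hcoef e \<alpha> i * Ghat e \<alpha> i = 1"
proof -
  define h where "h = [:inverse (poly (Ghat e \<alpha> i) (\<alpha> i)):]"
  have "poly (1 - h * Ghat e \<alpha> i) (\<alpha> i) = 0"
    using poly_Ghat_eq_0_iff[OF assms assms] by (simp add: h_def)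
  then have "Gi \<alpha> i dvd 1 - h * Ghat e \<alpha> i"
    unfolding Gi_def by (rule poly_eq_0_iff_dvd[THEN iffD1])
  then obtain z where "1 - h * Ghat e \<alpha> i = Gi \<alpha> i * z"
    by (auto simp: dvd_def)
  then have "\<exists>h z. z * Gi \<alpha> i + h * Ghat e \<alpha> i = 1"
    by (metis add.commute diff_add_cancel mult.commute)
  then show ?thesis
    unfolding hcoef_def by (rule someI_ex)
qed

lemma poly_mu:
  assumes "i < e" "j < e"
  shows "poly (mu e \<alpha> i) (\<alpha> j) = (if i = j then 1 else 0)"
proof -
  obtain z where z: "z * Gi \<alpha> i + hcoef e \<alpha> i * Ghat e \<alpha> i = 1"
    using hcoef_bezout[OF assms(1)] by blast
  have "poly (mu e \<alpha> i) (\<alpha> j) = poly (hcoef e \<alpha> i) (\<alpha> j) * poly (Ghat e \<alpha> i) (\<alpha> j)"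
    unfolding mu_def using assms(2) by (simp add: poly_mod_umod)
  moreover have "poly (hcoef e \<alpha> i * Ghat e \<alpha> i) (\<alpha> i) = 1"
    using arg_cong[OF z, of "\<lambda>p. poly p (\<alpha> i)"] by (simp add: Gi_def)
  ultimately show ?thesis
    using poly_Ghat_eq_0_iff[OF assms] by auto
qed

lemma in_R_mu: "in_R e (mu e \<alpha> i)"
  unfolding mu_def by (rule in_R_mod)

lemma poly_sum_smult_mu:
  assumes "j < e"
  shows "poly ((\<Sum>i<e. smult (s i) (mu e \<alpha> i)) mod umod e) (\<alpha> j) = s j"
  using assms by (simp add: poly_mod_umod poly_sum poly_mu if_distrib cong: if_cong)

lemma coords_eq:
  assumes "in_R e (r :: 'a poly)"
  shows "coords e \<alpha> r = map (\<lambda>i. poly r (\<alpha> i)) [0..<e]"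
  unfolding coords_def
proof (rule the_equality)
  let ?s = "map (\<lambda>i. poly r (\<alpha> i)) [0..<e]"
  have "poly ((\<Sum>i<e. smult (?s ! i) (mu e \<alpha> i)) mod umod e) (\<alpha> j) = poly r (\<alpha> j)"
    if "j < e" for j
    using poly_sum_smult_mu[OF that, of "(!) ?s"] that by simp
  then show "length ?s = e \<and> r = (\<Sum>i<e. smult (?s ! i) (mu e \<alpha> i)) mod umod e"
    using assms by (auto intro!: in_R_eqI in_R_mod)
next
  fix s assume s: "length s = e \<and> r = (\<Sum>i<e. smult (s ! i) (mu e \<alpha> i)) mod umod e"
  then have "poly r (\<alpha> j) = s ! j" if "j < e" for j
    using poly_sum_smult_mu[OF that, of "(!) s"] by simp
  with s show "s = map (\<lambda>i. poly r (\<alpha> i)) [0..<e]"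
    by (auto intro!: nth_equalityI)
qed

lemma coords_nth: "in_R e (r :: 'a poly) \<Longrightarrow> i < e \<Longrightarrow> coords e \<alpha> r ! i = poly r (\<alpha> i)"
  by (simp add: coords_eq)

lemma mod_umod_eq_0_iff: "x mod umod e = 0 \<longleftrightarrow> (\<forall>i<e. poly (x :: 'a poly) (\<alpha> i) = 0)"
proof
  assume "\<forall>i<e. poly x (\<alpha> i) = 0"
  then show "x mod umod e = 0"
    by (intro in_R_eqI in_R_mod in_R_0) (simp add: poly_mod_umod)
qed (metis poly_0 poly_mod_umod)

lemma poly_mult_mod_umod:
  "i < e \<Longrightarrow> poly (r * x mod umod e :: 'a poly) (\<alpha> i) = poly r (\<alpha> i) * poly x (\<alpha> i)"
  by (simp add: poly_mod_umod)

end

lemma sum_lessThan_mult_blocks: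
  "(\<Sum>idx<e*n. g idx) = (\<Sum>j<n. \<Sum>l<e. g (j*e + l :: nat))"
proof -
  have "(\<Sum>l<e. g (j*e + l)) = sum g {j*e..<j*e+e}" for j
    using sum.shift_bounds_nat_ivl[of g 0 "j*e" e]
    by (simp add: atLeast0LessThan add.commute)
  then have "(\<Sum>j<n. \<Sum>l<e. g (j*e + l)) = sum g {..<n*e}"
    by (simp add: sum.nat_group)
  then show ?thesis
    by (simp add: mult.commute)
qed

lemma ext_blocks:
  assumes "0 < (e::nat)"
    and "\<And>j l. j < n \<Longrightarrow> l < e \<Longrightarrow> f (j*e + l) = g (j*e + l)"
    and "\<And>idx. e*n \<le> idx \<Longrightarrow> f idx = g idx"
  shows "f = g"
proof
  fix idx
  show "f idx = g idx"
  proof (cases "idx < e*n")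
    case True
    then have "idx div e < n" "idx mod e < e"
      using assms(1) by (auto simp: div_less_iff_less_mult mult.commute)
    then show ?thesis
      using assms(2) by (metis div_mult_mod_eq)
  qed (use assms(3) in simp)
qed

locale gray_map = split_modulus e \<alpha> for e and \<alpha> :: "nat \<Rightarrow> 'a::field" +
  fixes M N :: "nat \<Rightarrow> nat \<Rightarrow> 'a" and \<gamma> :: 'a and n :: nat
  assumes left_inverse: "\<forall>i<e. \<forall>j<e. (\<Sum>l<e. N i l * M l j) = (if i = j then 1 else 0)"
    and gamma_nonzero: "\<gamma> \<noteq> 0"
    and M_M_transpose: "\<forall>i<e. \<forall>j<e. (\<Sum>l<e. M i l * M j l) = (if i = j then \<gamma> else 0)"
begin

abbreviation \<phi> :: "(nat \<Rightarrow> 'a poly) \<Rightarrow> nat \<Rightarrow> 'a" where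
  "\<phi> \<equiv> gray e \<alpha> M n"

lemma row_mult_M_mult_transpose:
  assumes "k < e"
  shows "(\<Sum>l<e. (\<Sum>i<e. a i * M i l) * M k l) = \<gamma> * a k"
proof -
  have "(\<Sum>l<e. (\<Sum>i<e. a i * M i l) * M k l) = (\<Sum>l<e. \<Sum>i<e. a i * (M i l * M k l))"
    by (simp add: sum_distrib_right mult.assoc)
  also have "\<dots> = (\<Sum>i<e. a i * (\<Sum>l<e. M i l * M k l))"
    by (subst sum.swap) (simp add: sum_distrib_left)
  also have "\<dots> = (\<Sum>i<e. a i * (if i = k then \<gamma> else 0))"
    using assms M_M_transpose by (intro sum.cong refl) auto
  also have "\<dots> = \<gamma> * a k"
    using assms by (simp add: if_distrib cong: if_cong)
  finally show ?thesis .
qed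

lemma inner_row_mult_M:
  "(\<Sum>l<e. (\<Sum>i<e. a i * M i l) * (\<Sum>k<e. b k * M k l)) = \<gamma> * (\<Sum>k<e. a k * b k)"
proof -
  have "(\<Sum>l<e. (\<Sum>i<e. a i * M i l) * (\<Sum>k<e. b k * M k l))
      = (\<Sum>l<e. \<Sum>k<e. b k * ((\<Sum>i<e. a i * M i l) * M k l))"
    by (simp add: sum_distrib_left mult_ac)
  also have "\<dots> = (\<Sum>k<e. b k * (\<Sum>l<e. (\<Sum>i<e. a i * M i l) * M k l))"
    by (subst sum.swap) (simp add: sum_distrib_left)
  also have "\<dots> = (\<Sum>k<e. b k * (\<gamma> * a k))"
    by (intro sum.cong refl) (simp add: row_mult_M_mult_transpose)
  also have "\<dots> = \<gamma> * (\<Sum>k<e. a k * b k)"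
    by (simp add: sum_distrib_left mult_ac)
  finally show ?thesis .
qed

lemma row_mult_N_mult_M:
  assumes "l < e"
  shows "(\<Sum>i<e. (\<Sum>k<e. y k * N k i) * M i l) = y l"
proof -
  have "(\<Sum>i<e. (\<Sum>k<e. y k * N k i) * M i l) = (\<Sum>i<e. \<Sum>k<e. y k * (N k i * M i l))"
    by (simp add: sum_distrib_right mult.assoc)
  also have "\<dots> = (\<Sum>k<e. y k * (\<Sum>i<e. N k i * M i l))"
    by (subst sum.swap) (simp add: sum_distrib_left)
  also have "\<dots> = (\<Sum>k<e. y k * (if k = l then 1 else 0))"
    using assms left_inverse by (intro sum.cong refl) auto
  also have "\<dots> = y l"
    using assms by (simp add: if_distrib cong: if_cong)
  finally show ?thesis .
qed

lemma gray_eval: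
  assumes "c \<in> Rwords e n"
  shows "\<phi> c = (\<lambda>idx. if idx < e*n
    then \<Sum>i<e. poly (c (idx div e)) (\<alpha> i) * M i (idx mod e) else 0)"
  unfolding gray_def
  using assms by (intro ext if_cong refl sum.cong) (auto simp: coords_nth in_R_Rwords)

lemma gray_block:
  assumes "c \<in> Rwords e n" "j < n" "l < e"
  shows "\<phi> c (j*e + l) = (\<Sum>i<e. poly (c j) (\<alpha> i) * M i l)"
proof -
  have "j*e + l < e*n"
  proof -
    have "j*e + l < (j + 1) * e"
      using assms(3) by simp
    also have "\<dots> \<le> n * e"
      using assms(2) by (intro mult_right_mono) auto
    finally show ?thesis
      by (simp add: mult.commute)
  qed
  then show ?thesis
    using assms by (simp add: gray_eval)
qed

lemma gray_in_Fwords: "\<phi> c \<in> Fwords (e*n)"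
  unfolding gray_def Fwords_def by auto

lemma inj_on_gray: "inj_on \<phi> (Rwords e n)"
proof (rule inj_onI, rule ext)
  fix c d j
  assume c: "c \<in> Rwords e n" and d: "d \<in> Rwords e n" and eq: "\<phi> c = \<phi> d"
  have recover: "\<gamma> * poly (x j) (\<alpha> k) = (\<Sum>l<e. \<phi> x (j*e + l) * M k l)"
    if "x \<in> Rwords e n" "j < n" "k < e" for x k
    using that by (simp add: gray_block row_mult_M_mult_transpose)
  show "c j = d j"
  proof (cases "j < n")
    case True
    then have "\<gamma> * poly (c j) (\<alpha> k) = \<gamma> * poly (d j) (\<alpha> k)" if "k < e" for k
      using recover[OF c] recover[OF d] eq that by simp
    then show ?thesis
      using gamma_nonzero by (intro in_R_eqI in_R_Rwords[OF c] in_R_Rwords[OF d]) simp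
  qed (simp add: Rwords_vanish[OF c] Rwords_vanish[OF d])
qed

lemma Fwords_subset_gray_image: "Fwords (e*n) \<subseteq> \<phi> ` Rwords e n"
proof
  fix y :: "nat \<Rightarrow> 'a" assume y: "y \<in> Fwords (e*n)"
  \<comment> \<open>\<open>v j\<close> is block \<open>j\<close> of \<open>y\<close> times the inverse \<open>N\<close>: the evaluations \<open>d\<^sub>j(\<alpha>\<^sub>i)\<close> of the preimage\<close>
  define v where "v j i = (\<Sum>k<e. y (j*e + k) * N k i)" for j i
  define d where "d j = (if j < n then (\<Sum>i<e. smult (v j i) (mu e \<alpha> i)) mod umod e else 0)" for j
  have d: "d \<in> Rwords e n"
    unfolding Rwords_def d_def by (auto simp: in_R_mod in_R_0)
  have "\<phi> d = y"
  proof (rule ext_blocks[OF e_pos])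
    fix j l assume "j < n" "l < e"
    then show "\<phi> d (j*e + l) = y (j*e + l)"
      by (simp add: gray_block[OF d] d_def poly_sum_smult_mu row_mult_N_mult_M v_def)
  next
    fix idx assume "e*n \<le> idx"
    then show "\<phi> d idx = y idx"
      using y gray_in_Fwords[of d] by (simp add: Fwords_def)
  qed
  with d show "y \<in> \<phi> ` Rwords e n"
    by blast
qed

lemma gray_add: "c \<in> Rwords e n \<Longrightarrow> d \<in> Rwords e n \<Longrightarrow> \<phi> (c + d) = \<phi> c + \<phi> d"
  by (rule ext) (simp add: gray_eval Rwords_add sum.distrib distrib_right)

lemma gray_diff: "c \<in> Rwords e n \<Longrightarrow> d \<in> Rwords e n \<Longrightarrow> \<phi> (c - d) = \<phi> c - \<phi> d"
  by (rule ext) (simp add: gray_eval Rwords_diff sum_subtractf left_diff_distrib)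

definition Rmult :: "'a poly \<Rightarrow> (nat \<Rightarrow> 'a poly) \<Rightarrow> nat \<Rightarrow> 'a poly" where
  "Rmult r c = (\<lambda>j. r * c j mod umod e)"

lemma Rwords_Rmult: "c \<in> Rwords e n \<Longrightarrow> Rmult r c \<in> Rwords e n"
  unfolding Rwords_def Rmult_def by (auto intro: in_R_mod)

lemma poly_Rmult: "i < e \<Longrightarrow> poly (Rmult r c j) (\<alpha> i) = poly r (\<alpha> i) * poly (c j) (\<alpha> i)"
  unfolding Rmult_def by (rule poly_mult_mod_umod)

lemma gray_Rmult_const: "c \<in> Rwords e n \<Longrightarrow> \<phi> (Rmult [:a:] c) = fscale a (\<phi> c)"
  unfolding fscale_def
  by (rule ext) (simp add: gray_eval Rwords_Rmult poly_Rmult sum_distrib_left mult.assoc)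

lemma gray_inner:
  assumes "c \<in> Rwords e n" "d \<in> Rwords e n"
  shows "(\<Sum>idx<e*n. \<phi> c idx * \<phi> d idx) = \<gamma> * (\<Sum>i<e. poly (\<Sum>j<n. c j * d j) (\<alpha> i))"
proof -
  have "(\<Sum>idx<e*n. \<phi> c idx * \<phi> d idx) = (\<Sum>j<n. \<Sum>l<e. \<phi> c (j*e + l) * \<phi> d (j*e + l))"
    by (rule sum_lessThan_mult_blocks)
  also have "\<dots> = (\<Sum>j<n. \<gamma> * (\<Sum>i<e. poly (c j) (\<alpha> i) * poly (d j) (\<alpha> i)))"
    using assms by (intro sum.cong refl) (simp add: gray_block inner_row_mult_M)
  also have "\<dots> = \<gamma> * (\<Sum>i<e. \<Sum>j<n. poly (c j) (\<alpha> i) * poly (d j) (\<alpha> i))"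
    by (subst sum.swap) (simp add: sum_distrib_left)
  also have "\<dots> = \<gamma> * (\<Sum>i<e. poly (\<Sum>j<n. c j * d j) (\<alpha> i))"
    by (simp add: poly_sum)
  finally show ?thesis .
qed

lemma gray_inner_Rmult_mu:
  assumes "c \<in> Rwords e n" "d \<in> Rwords e n" "i < e"
  shows "(\<Sum>idx<e*n. \<phi> (Rmult (mu e \<alpha> i) c) idx * \<phi> d idx) = \<gamma> * poly (\<Sum>j<n. c j * d j) (\<alpha> i)"
proof -
  have "poly (\<Sum>j<n. Rmult (mu e \<alpha> i) c j * d j) (\<alpha> k) =
      (if k = i then poly (\<Sum>j<n. c j * d j) (\<alpha> i) else 0)" if "k < e" for k
    using that assms(3) by (simp add: poly_sum poly_Rmult poly_mu)
  then show ?thesis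
    using assms by (simp add: gray_inner Rwords_Rmult)
qed

end

locale gray_code = gray_map +
  fixes C :: "(nat \<Rightarrow> 'a poly) set"
  assumes R_linear_code: "R_linear_code e n C"
begin

lemma code_subset_Rwords: "C \<subseteq> Rwords e n"
  using R_linear_code unfolding R_linear_code_def by blast

lemma code_add: "c \<in> C \<Longrightarrow> d \<in> C \<Longrightarrow> c + d \<in> C"
  using R_linear_code unfolding R_linear_code_def by blast

lemma code_Rmult: "in_R e r \<Longrightarrow> c \<in> C \<Longrightarrow> Rmult r c \<in> C"
  using R_linear_code unfolding R_linear_code_def Rmult_def by blast

lemma zero_in_code: "0 \<in> C"
proof -
  obtain c where "c \<in> C"
    using R_linear_code unfolding R_linear_code_def by blast
  then have "Rmult 0 c \<in> C"
    by (rule code_Rmult[OF in_R_0])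
  then show ?thesis
    by (simp add: Rmult_def zero_fun_def)
qed

lemma inj_on_gray_code: "inj_on \<phi> C"
  using inj_on_gray code_subset_Rwords by (rule inj_on_subset)

lemma F_linear_code_gray_image: "F_linear_code (e*n) (\<phi> ` C)"
  unfolding F_linear_code_def
proof (intro conjI ballI allI)
  show "\<phi> ` C \<subseteq> Fwords (e*n)"
    using gray_in_Fwords by blast
  have "\<phi> 0 = 0"
    using zero_in_code code_subset_Rwords by (subst gray_eval) (auto simp: fun_eq_iff)
  then show "0 \<in> \<phi> ` C"
    using zero_in_code by (metis image_eqI)
next
  fix x y assume "x \<in> \<phi> ` C" "y \<in> \<phi> ` C"
  then obtain c d where cd: "c \<in> C" "d \<in> C" and "x = \<phi> c" "y = \<phi> d"
    by blast
  moreover have "c \<in> Rwords e n" "d \<in> Rwords e n"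
    using cd code_subset_Rwords by auto
  ultimately have "x + y = \<phi> (c + d)"
    by (simp add: gray_add)
  then show "x + y \<in> \<phi> ` C"
    using code_add[OF cd] by blast
next
  fix a x assume "x \<in> \<phi> ` C"
  then obtain c where c: "c \<in> C" and "x = \<phi> c"
    by blast
  moreover have "c \<in> Rwords e n"
    using c code_subset_Rwords by auto
  ultimately have "fscale a x = \<phi> (Rmult [:a:] c)"
    by (simp add: gray_Rmult_const)
  then show "fscale a x \<in> \<phi> ` C"
    using code_Rmult[OF in_R_const c] by blast
qed

lemma gray_weight_diff:
  "c \<in> C \<Longrightarrow> c' \<in> C \<Longrightarrow> gray_weight e \<alpha> M n (c - c') = hamming_weight (e*n) (\<phi> c - \<phi> c')"
  unfolding gray_weight_def using code_subset_Rwords by (simp add: gray_diff subsetD)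

lemma min_dist_gray_image: "min_dist (e*n) (\<phi> ` C) = gray_dist e \<alpha> M n C"
proof -
  have "{hamming_weight (e*n) (x - y) | x y. x \<in> \<phi> ` C \<and> y \<in> \<phi> ` C \<and> x \<noteq> y}
      = {gray_weight e \<alpha> M n (c - c') | c c'. c \<in> C \<and> c' \<in> C \<and> c \<noteq> c'}"
    (is "?F = ?R")
  proof (intro equalityI subsetI)
    fix w assume "w \<in> ?F"
    then obtain c c' where cc': "c \<in> C" "c' \<in> C" "c \<noteq> c'"
      and "w = hamming_weight (e*n) (\<phi> c - \<phi> c')"
      by blast
    then have "w = gray_weight e \<alpha> M n (c - c')"
      by (simp add: gray_weight_diff)
    with cc' show "w \<in> ?R"
      by blast
  next
    fix w assume "w \<in> ?R"
    then obtain c c' where cc': "c \<in> C" "c' \<in> C" "c \<noteq> c'"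
      and "w = gray_weight e \<alpha> M n (c - c')"
      by blast
    then have "w = hamming_weight (e*n) (\<phi> c - \<phi> c')"
      by (simp add: gray_weight_diff)
    moreover have "\<phi> c \<noteq> \<phi> c'"
      using cc' inj_on_gray_code by (auto dest: inj_onD)
    ultimately show "w \<in> ?F"
      using cc' by blast
  qed
  then show ?thesis
    unfolding min_dist_def gray_dist_def by simp
qed

lemma gray_image_R_dual: "\<phi> ` R_dual e n C = F_dual (e*n) (\<phi> ` C)"
proof
  show "\<phi> ` R_dual e n C \<subseteq> F_dual (e*n) (\<phi> ` C)"
    using code_subset_Rwords gray_in_Fwords
    by (auto simp: R_dual_def F_dual_def gray_inner mod_umod_eq_0_iff)
next
  show "F_dual (e*n) (\<phi> ` C) \<subseteq> \<phi> ` R_dual e n C"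
  proof
    fix y assume y: "y \<in> F_dual (e*n) (\<phi> ` C)"
    then obtain d where d: "d \<in> Rwords e n" "y = \<phi> d"
      using Fwords_subset_gray_image unfolding F_dual_def by blast
    have "(\<Sum>j<n. c j * d j) mod umod e = 0" if c: "c \<in> C" for c
      unfolding mod_umod_eq_0_iff
    proof (intro allI impI)
      fix i assume i: "i < e"
      have "(\<Sum>idx<e*n. \<phi> (Rmult (mu e \<alpha> i) c) idx * y idx) = 0"
        using y code_Rmult[OF in_R_mu c] unfolding F_dual_def by blast
      then show "poly (\<Sum>j<n. c j * d j) (\<alpha> i) = 0"
        using gray_inner_Rmult_mu[OF _ d(1) i] c code_subset_Rwords d(2) gamma_nonzero by auto
    qed
    then show "y \<in> \<phi> ` R_dual e n C"
      using d unfolding R_dual_def by blast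
  qed
qed

lemma gray_image_self_dual_iff: "\<phi> ` C = F_dual (e*n) (\<phi> ` C) \<longleftrightarrow> C = R_dual e n C"
proof -
  have "R_dual e n C \<subseteq> Rwords e n"
    unfolding R_dual_def by blast
  then show ?thesis
    using inj_on_image_eq_iff[OF inj_on_gray code_subset_Rwords] gray_image_R_dual by metis
qed

end

theorem theorem2p4:
  fixes p m e t n k :: nat
    and \<alpha> :: "nat \<Rightarrow> 'a::{finite,field}"
    and M :: "nat \<Rightarrow> nat \<Rightarrow> 'a"
    and \<gamma> :: 'a
    and C :: "(nat \<Rightarrow> 'a poly) set"
  assumes "prime p" and "odd p" and "CARD('a) = p ^ m"
    and "CARD('a) = e * t + 1" and "e \<ge> 2" and "t \<ge> 1"
    and "inj_on \<alpha> {..<e}"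
    and "umod e = (\<Prod>i<e. [:- \<alpha> i, 1:])"
    and "\<exists>N::nat \<Rightarrow> nat \<Rightarrow> 'a. \<forall>i<e. \<forall>j<e.
            (\<Sum>l<e. N i l * M l j) = (if i = j then 1 else 0)"
    and "\<gamma> \<noteq> 0"
    and "\<forall>i<e. \<forall>j<e. (\<Sum>l<e. M i l * M j l) = (if i = j then \<gamma> else 0)"
    and "R_linear_code e n C"
    and "card C = CARD('a) ^ (e * k)"
  shows "(F_linear_code (e * n) (gray e \<alpha> M n ` C)
          \<and> F_dim (gray e \<alpha> M n ` C) = e * k
          \<and> min_dist (e * n) (gray e \<alpha> M n ` C) = gray_dist e \<alpha> M n C)
       \<and> gray e \<alpha> M n ` (R_dual e n C) = F_dual (e * n) (gray e \<alpha> M n ` C)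
       \<and> (C \<subseteq> R_dual e n C \<longrightarrow>
            F_linear_code (e * n) (gray e \<alpha> M n ` C)
            \<and> gray e \<alpha> M n ` C \<subseteq> F_dual (e * n) (gray e \<alpha> M n ` C))
       \<and> (gray e \<alpha> M n ` C = F_dual (e * n) (gray e \<alpha> M n ` C) \<longleftrightarrow> C = R_dual e n C)"
proof -
  obtain N :: "nat \<Rightarrow> nat \<Rightarrow> 'a" where "\<forall>i<e. \<forall>j<e. (\<Sum>l<e. N i l * M l j) = (if i = j then 1 else 0)"
    using assms(9) by blast
  then interpret gray_code e \<alpha> M N \<gamma> n C
    using assms(7,8,10-12) by unfold_locales
  have "card (gray e \<alpha> M n ` C) = CARD('a) ^ (e * k)"
    using card_image[OF inj_on_gray_code] assms(13) by simp
  then have "F_dim (gray e \<alpha> M n ` C) = e * k"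
    by (rule F_dim_eq_of_card[OF F_linear_code_gray_image])
  moreover have "C \<subseteq> R_dual e n C \<Longrightarrow> gray e \<alpha> M n ` C \<subseteq> F_dual (e * n) (gray e \<alpha> M n ` C)"
    using gray_image_R_dual by blast
  ultimately show ?thesis
    using F_linear_code_gray_image min_dist_gray_image gray_image_R_dual gray_image_self_dual_iff
    by blast
qed

end
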